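(* Let $G$ be a connected chordal graph, $X\subseteq V(G)$ a clique, and $C_1,\dots,C_r$ some connected components of $G\setminus X$. Then for every $j\in[r]$, the evaporation time of $C_j$ in $G$ with exception set $X$ equals the evaporation time of $C_j$ in $G[X\cup C_1\cup\cdots\cup C_r]$ with exception set $X$.
   Context: A vertex is simplicial if its neighborhood is a clique. For a chordal graph $G$ and a clique $X\subseteq V(G)$ (possibly empty), the evaporation sequence of $G$ with exception set $X$ is defined recursively: if $X=V(G)$ it is the empty sequence; otherwise let $L_1$ be the set of simplicial vertices of $G$ that are not in $X$ (this set is always nonempty), and the evaporation sequence is $L_1$ followed by the evaporation sequence of $G-L_1$ with exception set $X$. If the evaporation sequence is $L_1,\dots,L_t$ and $S\subseteq V(G)\setminus X$ is nonempty, the evaporation time of $S$ in $G$ (with exception set $X$) is the largest $i$ with $L_i\cap S\neq\emptyset$. $G[S]$ is the induced subgraph on $S$. *)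

theory Defs
  imports Main
begin

text \<open>A finite simple graph is given by a finite vertex set V and a symmetric,
irreflexive adjacency relation E; only edges between vertices of V matter.
An induced subgraph G[S] is represented by (S, E).\<close>

definition graph :: "'a set \<Rightarrow> ('a \<Rightarrow> 'a \<Rightarrow> bool) \<Rightarrow> bool" where
  "graph V E \<longleftrightarrow> finite V \<and> (\<forall>u v. E u v \<longrightarrow> E v u) \<and> (\<forall>v. \<not> E v v)"

definition is_clique :: "'a set \<Rightarrow> ('a \<Rightarrow> 'a \<Rightarrow> bool) \<Rightarrow> 'a set \<Rightarrow> bool" where
  "is_clique V E X \<longleftrightarrow> X \<subseteq> V \<and> (\<forall>u\<in>X. \<forall>w\<in>X. u \<noteq> w \<longrightarrow> E u w)"

definition reach :: "'a set \<Rightarrow> ('a \<Rightarrow> 'a \<Rightarrow> bool) \<Rightarrow> 'a \<Rightarrow> 'a \<Rightarrow> bool" where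
  "reach W E = (\<lambda>x y. x \<in> W \<and> y \<in> W \<and> E x y)\<^sup>*\<^sup>*"

definition connected_graph :: "'a set \<Rightarrow> ('a \<Rightarrow> 'a \<Rightarrow> bool) \<Rightarrow> bool" where
  "connected_graph V E \<longleftrightarrow> V \<noteq> {} \<and> (\<forall>u\<in>V. \<forall>v\<in>V. reach V E u v)"

definition is_component :: "'a set \<Rightarrow> ('a \<Rightarrow> 'a \<Rightarrow> bool) \<Rightarrow> 'a set \<Rightarrow> bool" where
  "is_component W E C \<longleftrightarrow> (\<exists>u\<in>W. C = {v. reach W E u v})"

definition is_cycle :: "'a set \<Rightarrow> ('a \<Rightarrow> 'a \<Rightarrow> bool) \<Rightarrow> 'a list \<Rightarrow> bool" where
  "is_cycle V E vs \<longleftrightarrow> distinct vs \<and> set vs \<subseteq> V \<and> length vs \<ge> 3 \<and>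
     (\<forall>i < length vs. E (vs ! i) (vs ! ((i + 1) mod length vs)))"

definition has_chord :: "('a \<Rightarrow> 'a \<Rightarrow> bool) \<Rightarrow> 'a list \<Rightarrow> bool" where
  "has_chord E vs \<longleftrightarrow> (\<exists>i < length vs. \<exists>j < length vs. i \<noteq> j \<and>
      j \<noteq> (i + 1) mod length vs \<and> i \<noteq> (j + 1) mod length vs \<and> E (vs ! i) (vs ! j))"

definition chordal :: "'a set \<Rightarrow> ('a \<Rightarrow> 'a \<Rightarrow> bool) \<Rightarrow> bool" where
  "chordal V E \<longleftrightarrow> graph V E \<and> (\<forall>vs. is_cycle V E vs \<and> length vs \<ge> 4 \<longrightarrow> has_chord E vs)"

definition simplicial :: "'a set \<Rightarrow> ('a \<Rightarrow> 'a \<Rightarrow> bool) \<Rightarrow> 'a \<Rightarrow> bool" where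
  "simplicial V E v \<longleftrightarrow> v \<in> V \<and>
     (\<forall>u\<in>V. \<forall>w\<in>V. E v u \<and> E v w \<and> u \<noteq> w \<longrightarrow> E u w)"

text \<open>Evaporation: remaining vertex set after i rounds, and the i-th layer L_i
(1-indexed; layer 0 is empty). Once the remaining set equals X all further
layers are empty, so the evaporation sequence is L_1,...,L_t with L_i nonempty.\<close>
fun evap_rest :: "'a set \<Rightarrow> ('a \<Rightarrow> 'a \<Rightarrow> bool) \<Rightarrow> 'a set \<Rightarrow> nat \<Rightarrow> 'a set" where
  "evap_rest V E X 0 = V"
| "evap_rest V E X (Suc i) =
     evap_rest V E X i - {v \<in> evap_rest V E X i - X. simplicial (evap_rest V E X i) E v}"

definition evap_layer :: "'a set \<Rightarrow> ('a \<Rightarrow> 'a \<Rightarrow> bool) \<Rightarrow> 'a set \<Rightarrow> nat \<Rightarrow> 'a set" where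
  "evap_layer V E X i = (if i = 0 then {} else
     {v \<in> evap_rest V E X (i - 1) - X. simplicial (evap_rest V E X (i - 1)) E v})"

definition evap_time :: "'a set \<Rightarrow> ('a \<Rightarrow> 'a \<Rightarrow> bool) \<Rightarrow> 'a set \<Rightarrow> 'a set \<Rightarrow> nat" where
  "evap_time V E X S = (GREATEST i. evap_layer V E X i \<inter> S \<noteq> {})"

end

theory Submission
  imports Defs
begin

text \<open>Evaporation is local: whether a vertex is simplicial depends only on which of its
neighbours are still present. A component \<open>C\<close> of \<open>G - X\<close> has all its neighbours in
\<open>C \<union> X\<close>, and \<open>X\<close> is never removed, so by induction on the rounds the vertices of \<open>C\<close> are
removed at the same times in \<open>G\<close> as in any induced subgraph containing \<open>C \<union> X\<close>.\<close>

lemma evap_rest_subset: "evap_rest V E X i \<subseteq> V"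
  by (induction i) auto

lemma subset_evap_rest: "X \<subseteq> V \<Longrightarrow> X \<subseteq> evap_rest V E X i"
  by (induction i) auto

lemma evap_layer_Suc: "evap_layer V E X (Suc i) = evap_rest V E X i - evap_rest V E X (Suc i)"
  by (auto simp: evap_layer_def)

lemma simplicial_cong_neighbours:
  assumes "v \<in> R \<longleftrightarrow> v \<in> R'" and "\<And>u. E v u \<Longrightarrow> u \<in> R \<longleftrightarrow> u \<in> R'"
  shows "simplicial R E v \<longleftrightarrow> simplicial R' E v"
  using assms unfolding simplicial_def by blast

lemma evap_rest_Int_closed_eq:
  assumes "V' \<subseteq> V" "X \<subseteq> V'" "K \<subseteq> V'" "K \<inter> X = {}"
    and closed: "\<And>v u. v \<in> K \<Longrightarrow> u \<in> V \<Longrightarrow> E v u \<Longrightarrow> u \<in> K \<union> X"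
  shows "evap_rest V E X i \<inter> K = evap_rest V' E X i \<inter> K"
proof (induction i)
  case 0
  show ?case using assms(1,3) by auto
next
  case (Suc i)
  let ?R = "evap_rest V E X i" and ?R' = "evap_rest V' E X i"
  have "X \<subseteq> ?R" using assms(1,2) by (intro subset_evap_rest) blast
  moreover have "X \<subseteq> ?R'" using assms(2) by (rule subset_evap_rest)
  ultimately have same: "?R \<inter> (K \<union> X) = ?R' \<inter> (K \<union> X)"
    using Suc by blast
  have simp_same: "simplicial ?R E v \<longleftrightarrow> simplicial ?R' E v" if "v \<in> K" for v
  proof (rule simplicial_cong_neighbours)
    show "v \<in> ?R \<longleftrightarrow> v \<in> ?R'" using same that by blast
    fix u assume "E v u"
    have "u \<in> ?R \<Longrightarrow> u \<in> K \<union> X"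
      using closed[OF that _ \<open>E v u\<close>] evap_rest_subset[of V E X i] by blast
    moreover have "u \<in> ?R' \<Longrightarrow> u \<in> K \<union> X"
      using closed[OF that _ \<open>E v u\<close>] evap_rest_subset[of V' E X i] assms(1) by blast
    ultimately show "u \<in> ?R \<longleftrightarrow> u \<in> ?R'" using same by blast
  qed
  have "evap_rest V E X (Suc i) \<inter> K = {v \<in> ?R \<inter> K. \<not> simplicial ?R E v}"
    using assms(4) by auto
  also have "\<dots> = {v \<in> ?R' \<inter> K. \<not> simplicial ?R' E v}"
    using Suc simp_same by blast
  also have "\<dots> = evap_rest V' E X (Suc i) \<inter> K"
    using assms(4) by auto
  finally show ?case .
qed

lemma evap_layer_Int_closed_eq:
  assumes "V' \<subseteq> V" "X \<subseteq> V'" "K \<subseteq> V'" "K \<inter> X = {}"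
    and "\<And>v u. v \<in> K \<Longrightarrow> u \<in> V \<Longrightarrow> E v u \<Longrightarrow> u \<in> K \<union> X"
  shows "evap_layer V E X i \<inter> K = evap_layer V' E X i \<inter> K"
proof (cases i)
  case 0
  then show ?thesis by (simp add: evap_layer_def)
next
  case (Suc k)
  have "evap_layer V E X i \<inter> K = evap_rest V E X k \<inter> K - evap_rest V E X (Suc k) \<inter> K"
    by (simp only: Suc evap_layer_Suc Diff_Int_distrib2)
  also have "\<dots> = evap_rest V' E X k \<inter> K - evap_rest V' E X (Suc k) \<inter> K"
    by (simp only: evap_rest_Int_closed_eq[OF assms])
  also have "\<dots> = evap_layer V' E X i \<inter> K"
    by (simp only: Suc evap_layer_Suc Diff_Int_distrib2)
  finally show ?thesis .
qed

lemma reach_in_set: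
  assumes "reach W E u v" "u \<in> W"
  shows "v \<in> W"
  using assms(1) unfolding reach_def
  by (induction rule: rtranclp_induct) (use assms(2) in auto)

lemma component_subset:
  assumes "is_component W E C"
  shows "C \<subseteq> W"
proof
  fix v assume "v \<in> C"
  obtain u where "u \<in> W" "C = {v. reach W E u v}"
    using assms unfolding is_component_def by blast
  with \<open>v \<in> C\<close> show "v \<in> W" by (simp add: reach_in_set)
qed

lemma component_closed:
  assumes "is_component W E C" "v \<in> C" "w \<in> W" "E v w"
  shows "w \<in> C"
proof -
  obtain u where u: "u \<in> W" "C = {v. reach W E u v}"
    using assms(1) unfolding is_component_def by blast
  have "reach W E u v" using assms(2) u(2) by blast
  moreover have "v \<in> W" using calculation u(1) by (rule reach_in_set)
  ultimately have "reach W E u w"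
    unfolding reach_def using assms(3,4) by (rule_tac rtranclp.rtrancl_into_rtrancl) auto
  then show ?thesis using u(2) by blast
qed

theorem lemma5p11:
  fixes V :: "'a set" and E :: "'a \<Rightarrow> 'a \<Rightarrow> bool" and X :: "'a set"
    and C :: "nat \<Rightarrow> 'a set" and r j :: nat
  assumes "chordal V E"
    and "connected_graph V E"
    and "is_clique V E X"
    and "\<forall>i\<in>{1..r}. is_component (V - X) E (C i)"
    and "j \<in> {1..r}"
  shows "evap_time V E X (C j) = evap_time (X \<union> (\<Union>i\<in>{1..r}. C i)) E X (C j)"
proof -
  let ?W = "X \<union> (\<Union>i\<in>{1..r}. C i)"
  have XV: "X \<subseteq> V" using assms(3) unfolding is_clique_def by blast
  have components_outside_X: "C i \<subseteq> V - X" if "i \<in> {1..r}" for i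
    using assms(4) that by (intro component_subset) blast
  have Cj: "is_component (V - X) E (C j)" using assms(4,5) by blast
  have WV: "?W \<subseteq> V" using XV components_outside_X by blast
  have "evap_layer V E X i \<inter> C j = evap_layer ?W E X i \<inter> C j" for i
  proof (rule evap_layer_Int_closed_eq[OF WV])
    show "C j \<subseteq> ?W" using assms(5) by blast
    show "C j \<inter> X = {}" using components_outside_X[OF assms(5)] by blast
    show "u \<in> C j \<union> X" if "v \<in> C j" "u \<in> V" "E v u" for v u
      using component_closed[OF Cj that(1) _ that(3)] that(2) by blast
  qed auto
  then show ?thesis unfolding evap_time_def by simp
qed

end
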